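(* Let $\Omega_2=\{\omega_1,\omega_2\}$ with $\omega_1\neq\omega_2$, and $\mathcal{A}_2=2^{\Omega_2}$. A $q$-measure $\mu$ on $\mathcal{A}_2$ actualizes the coevent $\omega_1^*\oplus\omega_1^*\omega_2^*$ if and only if $\mu(\{\omega_2\})=0$ and $\mu(\Omega_2)\le\mu(\{\omega_1\})$.
   Context: Let $\Omega$ be a finite nonempty set and $\mathcal{A}=2^\Omega$. A coevent is a map $\phi:\mathcal{A}\to\{0,1\}$ with $\phi(\emptyset)=0$. For $\omega\in\Omega$ the evaluation map $\omega^*$ is the coevent with $\omega^*(A)=1$ if $\omega\in A$ and $0$ otherwise. Coevents are combined pointwise: $(\phi\oplus\psi)(A)=\phi(A)+\psi(A) \bmod 2$ and $(\phi\psi)(A)=\phi(A)\psi(A)$. For $f:\Omega\to[0,\infty)$ and a coevent $\phi$, the $q$-integral is $\int f\,d\phi=\int_0^\infty \phi(\{\omega\in\Omega: f(\omega)>\lambda\})\,d\lambda$ (Lebesgue measure in $\lambda$), and for $A\in\mathcal{A}$, $\int_A f\,d\phi=\int f\chi_A\,d\phi$. A $q$-measure is a map $\mu:\mathcal{A}\to[0,\infty)$ such that for all pairwise disjoint $A,B,C\in\mathcal{A}$: $\mu(A\cup B\cup C)=\mu(A\cup B)+\mu(A\cup C)+\mu(B\cup C)-\mu(A)-\mu(B)-\mu(C)$. The $q$-measure $\mu$ actualizes $\phi$ if there is a symmetric function $f:\Omega\times\Omega\to(0,\infty)$ such that for all $A\in\mathcal{A}$, $\mu(A)=\int g_A\,d\phi$,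 where $g_A(\omega')=\int_A f(\cdot,\omega')\,d\phi$ (the $q$-integral over $A$ of $\omega\mapsto f(\omega,\omega')$). *)

theory Defs
  imports "HOL-Analysis.Analysis"
begin

text \<open>A finite sample space is a finite set Omega of some type; events are subsets.
Coevents take values in Z_2, represented as bool (True = 1, False = 0).\<close>

definition coevent :: "'a set \<Rightarrow> ('a set \<Rightarrow> bool) \<Rightarrow> bool" where
  "coevent \<Omega> \<phi> \<longleftrightarrow> \<not> \<phi> {}"

definition eval_co :: "'a \<Rightarrow> ('a set \<Rightarrow> bool)" where
  "eval_co w = (\<lambda>A. w \<in> A)"

definition co_xor :: "('a set \<Rightarrow> bool) \<Rightarrow> ('a set \<Rightarrow> bool) \<Rightarrow> ('a set \<Rightarrow> bool)" where
  "co_xor \<phi> \<psi> = (\<lambda>A. \<phi> A \<noteq> \<psi> A)"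

definition co_mult :: "('a set \<Rightarrow> bool) \<Rightarrow> ('a set \<Rightarrow> bool) \<Rightarrow> ('a set \<Rightarrow> bool)" where
  "co_mult \<phi> \<psi> = (\<lambda>A. \<phi> A \<and> \<psi> A)"

definition q_integral :: "'a set \<Rightarrow> ('a set \<Rightarrow> bool) \<Rightarrow> ('a \<Rightarrow> real) \<Rightarrow> real" where
  "q_integral \<Omega> \<phi> f =
     (LBINT l:{0..}. (if \<phi> {w \<in> \<Omega>. f w > l} then 1 else 0))"

definition q_integral_on :: "'a set \<Rightarrow> ('a set \<Rightarrow> bool) \<Rightarrow> 'a set \<Rightarrow> ('a \<Rightarrow> real) \<Rightarrow> real" where
  "q_integral_on \<Omega> \<phi> A f = q_integral \<Omega> \<phi> (\<lambda>w. f w * indicator A w)"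

definition q_measure :: "'a set \<Rightarrow> ('a set \<Rightarrow> real) \<Rightarrow> bool" where
  "q_measure \<Omega> \<mu> \<longleftrightarrow>
     (\<forall>A. A \<subseteq> \<Omega> \<longrightarrow> \<mu> A \<ge> 0) \<and>
     (\<forall>A B C. A \<subseteq> \<Omega> \<and> B \<subseteq> \<Omega> \<and> C \<subseteq> \<Omega> \<and>
        A \<inter> B = {} \<and> A \<inter> C = {} \<and> B \<inter> C = {} \<longrightarrow>
        \<mu> (A \<union> B \<union> C) = \<mu> (A \<union> B) + \<mu> (A \<union> C) + \<mu> (B \<union> C) - \<mu> A - \<mu> B - \<mu> C)"

definition actualizes :: "'a set \<Rightarrow> ('a set \<Rightarrow> real) \<Rightarrow> ('a set \<Rightarrow> bool) \<Rightarrow> bool" where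
  "actualizes \<Omega> \<mu> \<phi> \<longleftrightarrow>
     (\<exists>f :: 'a \<Rightarrow> 'a \<Rightarrow> real.
        (\<forall>x\<in>\<Omega>. \<forall>y\<in>\<Omega>. f x y > 0 \<and> f x y = f y x) \<and>
        (\<forall>A. A \<subseteq> \<Omega> \<longrightarrow>
           \<mu> A = q_integral \<Omega> \<phi> (\<lambda>w'. q_integral_on \<Omega> \<phi> A (\<lambda>w. f w w'))))"

end

theory Submission
  imports Defs
begin

text \<open>
  On the two-point space the coevent
  \<open>\<phi> = \<omega>\<^sub>1\<^sup>* \<oplus> \<omega>\<^sub>1\<^sup>*\<omega>\<^sub>2\<^sup>*\<close> takes the value 1 exactly on the events that
  contain \<open>\<omega>\<^sub>1\<close> but not \<open>\<omega>\<^sub>2\<close>.  Hence, for \<open>h \<ge> 0\<close>, the level sets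
  \<open>{h > \<lambda>}\<close> are charged by \<open>\<phi>\<close> precisely for \<open>\<lambda> \<in> [h \<omega>\<^sub>2, h \<omega>\<^sub>1)\<close>, and the
  q-integral is the length \<open>max 0 (h \<omega>\<^sub>1 - h \<omega>\<^sub>2)\<close> of that interval.
  Applying this twice gives the measure induced by a positive symmetric kernel
  \<open>f\<close> in closed form: it vanishes on \<open>{\<omega>\<^sub>2}\<close>, equals
  \<open>a = max 0 (f\<^sub>1\<^sub>1 - f\<^sub>1\<^sub>2)\<close> on \<open>{\<omega>\<^sub>1}\<close> and
  \<open>max 0 (a - max 0 (f\<^sub>1\<^sub>2 - f\<^sub>2\<^sub>2))\<close> on \<open>\<Omega>\<^sub>2\<close>, which is at most \<open>a\<close>.
  This gives the forward direction.  Conversely, given the two conditions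
  (and \<open>\<mu> {} = 0\<close>, which every q-measure satisfies), we choose the kernel
  explicitly so that the closed form reproduces \<open>\<mu>\<close>.
\<close>

lemma q_integral_interval_profile:
  assumes profile: "\<And>l. 0 \<le> l \<Longrightarrow> \<phi> {w \<in> \<Omega>. f w > l} \<longleftrightarrow> a \<le> l \<and> l < b"
    and "0 \<le> a"
  shows "q_integral \<Omega> \<phi> f = max 0 (b - a)"
proof -
  have integrand: "(\<lambda>l. indicator {0..} l *\<^sub>R (if \<phi> {w \<in> \<Omega>. f w > l} then 1 else 0))
      = (indicator {a..<b} :: real \<Rightarrow> real)"
    using profile \<open>0 \<le> a\<close> by (auto simp: indicator_def fun_eq_iff)
  have "q_integral \<Omega> \<phi> f = integral\<^sup>L lborel (indicator {a..<b} :: real \<Rightarrow> real)"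
    unfolding q_integral_def set_lebesgue_integral_def integrand ..
  also have "\<dots> = max 0 (b - a)"
    by (cases "a \<le> b") (auto simp: integral_indicator measure_lborel_Ico)
  finally show ?thesis .
qed

abbreviation first_not_second :: "'a \<Rightarrow> 'a \<Rightarrow> 'a set \<Rightarrow> bool" where
  "first_not_second w1 w2 \<equiv> co_xor (eval_co w1) (co_mult (eval_co w1) (eval_co w2))"

lemma first_not_second_iff: "first_not_second w1 w2 A \<longleftrightarrow> w1 \<in> A \<and> w2 \<notin> A"
  by (auto simp: co_xor_def co_mult_def eval_co_def)

text \<open>Its q-integral on the two-point space: the level sets containing \<open>w1\<close> but not
  \<open>w2\<close> are those with \<open>max 0 (h w2) \<le> \<lambda> < h w1\<close>.\<close>

lemma q_integral_first_not_second:
  assumes "w1 \<noteq> w2"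
  shows "q_integral {w1, w2} (first_not_second w1 w2) h = max 0 (h w1 - max 0 (h w2))"
  by (rule q_integral_interval_profile) (use assms in \<open>auto simp: first_not_second_iff\<close>)

definition positive_symmetric_kernel :: "'a set \<Rightarrow> ('a \<Rightarrow> 'a \<Rightarrow> real) \<Rightarrow> bool" where
  "positive_symmetric_kernel \<Omega> f \<longleftrightarrow> (\<forall>x\<in>\<Omega>. \<forall>y\<in>\<Omega>. f x y > 0 \<and> f x y = f y x)"

definition kernel_measure ::
    "'a set \<Rightarrow> ('a set \<Rightarrow> bool) \<Rightarrow> ('a \<Rightarrow> 'a \<Rightarrow> real) \<Rightarrow> 'a set \<Rightarrow> real" where
  "kernel_measure \<Omega> \<phi> f A = q_integral \<Omega> \<phi> (\<lambda>w'. q_integral_on \<Omega> \<phi> A (\<lambda>w. f w w'))"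

lemma actualizes_iff_kernel_measure:
  "actualizes \<Omega> \<mu> \<phi> \<longleftrightarrow>
     (\<exists>f. positive_symmetric_kernel \<Omega> f \<and> (\<forall>A\<subseteq>\<Omega>. \<mu> A = kernel_measure \<Omega> \<phi> f A))"
  by (simp add: actualizes_def kernel_measure_def positive_symmetric_kernel_def)

lemma kernel_measure_first_not_second:
  assumes "w1 \<noteq> w2" and "positive_symmetric_kernel {w1, w2} f"
  defines "\<nu> \<equiv> kernel_measure {w1, w2} (first_not_second w1 w2) f"
  shows "\<nu> {} = 0" and "\<nu> {w2} = 0"
    and "\<nu> {w1} = max 0 (f w1 w1 - f w1 w2)"
    and "\<nu> {w1, w2} = max 0 (\<nu> {w1} - max 0 (f w1 w2 - f w2 w2))"
proof -
  have "f w1 w1 > 0" "f w1 w2 > 0" "f w2 w2 > 0" "f w2 w1 = f w1 w2"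
    using assms(2) unfolding positive_symmetric_kernel_def by blast+
  then show "\<nu> {} = 0" "\<nu> {w2} = 0" "\<nu> {w1} = max 0 (f w1 w1 - f w1 w2)"
    "\<nu> {w1, w2} = max 0 (\<nu> {w1} - max 0 (f w1 w2 - f w2 w2))"
    using assms(1)
    by (auto simp: \<nu>_def kernel_measure_def q_integral_on_def q_integral_first_not_second)
qed

text \<open>Every admissible pair of values is realised: for \<open>0 \<le> b \<le> a\<close> the kernel
  \<open>f\<^sub>1\<^sub>1 = c + a\<close>, \<open>f\<^sub>1\<^sub>2 = c\<close>, \<open>f\<^sub>2\<^sub>2 = 1\<close> with \<open>c = a - b + 1\<close> induces the
  value \<open>a\<close> on \<open>{w1}\<close> and \<open>max 0 (a - (c - 1)) = b\<close> on the whole space.\<close>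

lemma kernel_realising_first_not_second:
  assumes "w1 \<noteq> w2" and "0 \<le> b" and "b \<le> a"
  obtains f where "positive_symmetric_kernel {w1, w2} f"
    and "kernel_measure {w1, w2} (first_not_second w1 w2) f {w1} = a"
    and "kernel_measure {w1, w2} (first_not_second w1 w2) f {w1, w2} = b"
proof -
  define c where "c = a - b + 1"
  define f where "f = (\<lambda>x y. if x = w1 \<and> y = w1 then c + a else if x = w2 \<and> y = w2 then 1 else c)"
  have f_vals: "f w1 w1 = c + a" "f w1 w2 = c" "f w2 w1 = c" "f w2 w2 = 1"
    using assms(1) by (auto simp: f_def)
  have "c \<ge> 1" using assms by (simp add: c_def)
  then have kernel: "positive_symmetric_kernel {w1, w2} f"
    using assms f_vals by (auto simp: positive_symmetric_kernel_def)
  moreover have "kernel_measure {w1, w2} (first_not_second w1 w2) f {w1} = a"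
    and "kernel_measure {w1, w2} (first_not_second w1 w2) f {w1, w2} = b"
    using kernel_measure_first_not_second[OF assms(1) kernel] assms \<open>c \<ge> 1\<close> f_vals
    by (auto simp: c_def)
  ultimately show ?thesis by (rule that)
qed

text \<open>A q-measure vanishes on the empty event (grade-2 additivity with \<open>A = B = C = {}\<close>).\<close>

lemma q_measure_empty:
  assumes "q_measure \<Omega> \<mu>"
  shows "\<mu> {} = 0"
proof -
  have "\<mu> ({} \<union> {} \<union> {}) = \<mu> ({} \<union> {}) + \<mu> ({} \<union> {}) + \<mu> ({} \<union> {}) - \<mu> {} - \<mu> {} - \<mu> {}"
    using assms unfolding q_measure_def by (metis empty_subsetI inf_bot_left)
  then show ?thesis by simp
qed

lemma q_measure_nonneg: "q_measure \<Omega> \<mu> \<Longrightarrow> A \<subseteq> \<Omega> \<Longrightarrow> 0 \<le> \<mu> A"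
  by (simp add: q_measure_def)

theorem theorem4p4:
  fixes w1 w2 :: 'a and \<mu> :: "'a set \<Rightarrow> real"
  assumes "w1 \<noteq> w2"
    and "q_measure {w1, w2} \<mu>"
  shows "actualizes {w1, w2} \<mu> (co_xor (eval_co w1) (co_mult (eval_co w1) (eval_co w2)))
     \<longleftrightarrow> (\<mu> {w2} = 0 \<and> \<mu> {w1, w2} \<le> \<mu> {w1})"
  unfolding actualizes_iff_kernel_measure
proof (rule iffI)
  assume "\<exists>f. positive_symmetric_kernel {w1, w2} f \<and>
      (\<forall>A\<subseteq>{w1, w2}. \<mu> A = kernel_measure {w1, w2} (first_not_second w1 w2) f A)"
  then obtain f where kernel: "positive_symmetric_kernel {w1, w2} f"
    and induced: "\<forall>A\<subseteq>{w1, w2}. \<mu> A = kernel_measure {w1, w2} (first_not_second w1 w2) f A"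
    by blast
  from induced kernel_measure_first_not_second[OF assms(1) kernel]
  show "\<mu> {w2} = 0 \<and> \<mu> {w1, w2} \<le> \<mu> {w1}" by simp
next
  assume conds: "\<mu> {w2} = 0 \<and> \<mu> {w1, w2} \<le> \<mu> {w1}"
  have "0 \<le> \<mu> {w1, w2}" using q_measure_nonneg[OF assms(2)] by simp
  with conds obtain f where kernel: "positive_symmetric_kernel {w1, w2} f"
    and on_w1: "kernel_measure {w1, w2} (first_not_second w1 w2) f {w1} = \<mu> {w1}"
    and on_all: "kernel_measure {w1, w2} (first_not_second w1 w2) f {w1, w2} = \<mu> {w1, w2}"
    using kernel_realising_first_not_second[OF assms(1)] by blast
  note closed_form = kernel_measure_first_not_second[OF assms(1) kernel]
  have "\<mu> A = kernel_measure {w1, w2} (first_not_second w1 w2) f A" if "A \<subseteq> {w1, w2}" for A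
  proof -
    from that have "A = {} \<or> A = {w1} \<or> A = {w2} \<or> A = {w1, w2}" by blast
    then show ?thesis
      using on_w1 on_all conds closed_form(1,2) q_measure_empty[OF assms(2)] by auto
  qed
  with kernel show "\<exists>f. positive_symmetric_kernel {w1, w2} f \<and>
      (\<forall>A\<subseteq>{w1, w2}. \<mu> A = kernel_measure {w1, w2} (first_not_second w1 w2) f A)"
    by blast
qed

end
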